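(* Let $d\ge1$, $N=2^d$, $Q\ge1$, $P$ a cube in $\mathbb{R}^d$, $P_1,\dots,P_N$ its first-generation dyadic subcubes, and $\phi:P\to P_1$ the affine map $\phi(z)=c+\frac12 z$ (suitable $c$) mapping $P$ onto $P_1$. For a weight $w$ on $P$ define the weight $Tw$ on $P$ by $Tw(z)=\frac{NQ-(N-1)}{Q}\,w(\phi^{-1}(z))$ for $z\in P_1$ and $Tw(z)=1$ for $z\in P\setminus P_1$; for $E\subseteq P$ let $S(E)=\phi(E)$. Let $w_0$ be any weight on $P$ with $\langle w_0\rangle_P=Q$, $\operatorname{ess\,inf}_{z\in P}w_0(z)=1$ and $[w_0]_{A_1^d(P)}=Q$, let $E_0=P$, and define $w_{k+1}=Tw_k$, $E_{k+1}=S(E_k)$. Then for every $k\ge0$, $[w_k]_{A_1^d(P)}=Q$, $\langle w_k\rangle_P=Q$, $\operatorname{ess\,inf}_{z\in P}w_k(z)=1$, $\langle\mathbf{1}_{E_k}\rangle_P=N^{-k}$, and \[ \frac{w_k(E_k)}{|P|}=Q\Bigl(1-\frac{N-1}{NQ}\Bigr)^k. \]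
   Context: A weight on $P$ is a nonnegative locally integrable function; $w(E)=\int_Ew$, $\langle g\rangle_R=\frac1{|R|}\int_Rg$. $\mathcal{D}(P)$ is the collection of dyadic subcubes of $P$; $M^d_Pg(z)=\sup_{R\in\mathcal{D}(P),\,z\in R}\langle|g|\rangle_R$ and $[w]_{A_1^d(P)}=\operatorname{ess\,sup}_{z\in P}M^d_Pw(z)/w(z)$. An example of admissible $w_0$: $w_0=1$ on $P_1,\dots,P_{N-1}$ and $w_0=1+N(Q-1)$ on $P_N$. *)

theory Defs
  imports "HOL-Analysis.Analysis"
begin

definition cube :: "real^'n \<Rightarrow> real \<Rightarrow> (real^'n) set" where
  "cube a l = {x. \<forall>i. a$i \<le> x$i \<and> x$i < a$i + l}"

definition dyadic_gen :: "real^'n \<Rightarrow> real \<Rightarrow> nat \<Rightarrow> (real^'n) set set" where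
  "dyadic_gen a l k = {cube (a + (l / 2^k) *\<^sub>R (\<chi> i. real (j i))) (l / 2^k) | j. \<forall>i. j i < (2::nat)^k}"

definition dyadic_subcubes :: "real^'n \<Rightarrow> real \<Rightarrow> (real^'n) set set" where
  "dyadic_subcubes a l = (\<Union>k. dyadic_gen a l k)"

definition wmeas :: "(real^'n \<Rightarrow> real) \<Rightarrow> (real^'n) set \<Rightarrow> real" where
  "wmeas w E = (LINT x:E|lebesgue. w x)"

definition avg :: "(real^'n \<Rightarrow> real) \<Rightarrow> (real^'n) set \<Rightarrow> real" where
  "avg g R = wmeas g R / measure lebesgue R"

definition dyadic_max :: "real^'n \<Rightarrow> real \<Rightarrow> (real^'n \<Rightarrow> real) \<Rightarrow> real^'n \<Rightarrow> ereal" where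
  "dyadic_max a l g z = (SUP R \<in> {R \<in> dyadic_subcubes a l. z \<in> R}. ereal (avg (\<lambda>x. \<bar>g x\<bar>) R))"

definition ess_sup_on :: "(real^'n) set \<Rightarrow> (real^'n \<Rightarrow> ereal) \<Rightarrow> ereal" where
  "ess_sup_on S f = Inf {c. AE x in lebesgue_on S. f x \<le> c}"

definition ess_inf_on :: "(real^'n) set \<Rightarrow> (real^'n \<Rightarrow> ereal) \<Rightarrow> ereal" where
  "ess_inf_on S f = Sup {c. AE x in lebesgue_on S. c \<le> f x}"

definition A1_const :: "real^'n \<Rightarrow> real \<Rightarrow> (real^'n \<Rightarrow> real) \<Rightarrow> ereal" where
  "A1_const a l w = ess_sup_on (cube a l) (\<lambda>z. dyadic_max a l w z / ereal (w z))"

text \<open>The operator T (with phi(z) = c + z/2, so phi^{-1}(z) = 2(z - c)).\<close>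
definition Top :: "real \<Rightarrow> real \<Rightarrow> real^'n \<Rightarrow> (real^'n) set \<Rightarrow> (real^'n \<Rightarrow> real) \<Rightarrow> real^'n \<Rightarrow> real" where
  "Top N Q c P1 w z = (if z \<in> P1 then (N * Q - (N - 1)) / Q * w (2 *\<^sub>R (z - c)) else 1)"

end

theory Submission
  imports Defs
begin

text \<open>The affine map \<open>\<phi>\<close> carries the dyadic cubes of \<open>P\<close> bijectively onto those of the child
  \<open>P1 = \<phi>(P)\<close>, and every other dyadic cube is \<open>P\<close> itself or misses \<open>P1\<close>. Since \<open>T w\<close> is
  \<open>1\<close> off \<open>P1\<close> and \<open>\<alpha> = (NQ - (N - 1))/Q\<close> times a rescaled copy of \<open>w\<close> on \<open>P1\<close>, its
  dyadic averages are \<open>Q\<close> on \<open>P\<close> (this is what fixes \<open>\<alpha>\<close>), \<open>1\<close> on the cubes missing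
  \<open>P1\<close>, and \<open>\<alpha>\<close> times the corresponding average of \<open>w\<close> on the cubes inside \<open>P1\<close>.
  Hence \<open>M(T w) = Q = Q T w\<close> on \<open>P - P1\<close> and \<open>M(T w) \<le> max Q (\<alpha> M w) \<le> Q T w\<close> on \<open>P1\<close>,
  so \<open>[T w]\<^sub>A\<^sub>1 = Q\<close> and \<open>ess inf T w = 1\<close>, both attained on \<open>P - P1\<close>, which has positive
  measure. Finally \<open>|E (k+1)| = |E k| / N\<close> and, by the change of variables \<open>z = \<phi> y\<close>,
  \<open>w (k+1) (E (k+1)) = (\<alpha>/N) w k (E k)\<close>.\<close>

section \<open>Affine changes of variables\<close>

lemma affine_Basis_sum_eq:
  "(\<lambda>x::'a::euclidean_space. t + (\<Sum>j\<in>Basis. (c * (x \<bullet> j)) *\<^sub>R j)) = (\<lambda>x. t + c *\<^sub>R x)"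
  unfolding scaleR_scaleR[symmetric] scaleR_sum_right[symmetric]
  by (simp add: euclidean_representation)

lemma lebesgue_measurable_affine [measurable]:
  "(\<lambda>x::'a::euclidean_space. t + c *\<^sub>R x) \<in> lebesgue \<rightarrow>\<^sub>M lebesgue"
proof (cases "c = 0")
  case False
  then show ?thesis
    using lebesgue_affine_measurable[of "\<lambda>_. c" t] unfolding affine_Basis_sum_eq by simp
qed simp

lemma affine_image_eq_vimage:
  fixes t :: "'a::real_vector"
  assumes "c \<noteq> 0"
  shows "(\<lambda>x. t + c *\<^sub>R x) ` S = (\<lambda>z. (1/c) *\<^sub>R (z - t)) -` S"
proof (intro equalityI subsetI)
  fix z assume "z \<in> (\<lambda>z. (1/c) *\<^sub>R (z - t)) -` S"
  moreover have "z = t + c *\<^sub>R ((1/c) *\<^sub>R (z - t))"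
    using assms by simp
  ultimately show "z \<in> (\<lambda>x. t + c *\<^sub>R x) ` S"
    by (metis imageI vimageD)
next
  fix z assume "z \<in> (\<lambda>x. t + c *\<^sub>R x) ` S"
  then obtain x where "x \<in> S" "z = t + c *\<^sub>R x" by blast
  then show "z \<in> (\<lambda>z. (1/c) *\<^sub>R (z - t)) -` S"
    using assms by simp
qed

lemma sets_lebesgue_affine_image:
  fixes S :: "'a::euclidean_space set"
  assumes "c \<noteq> 0" "S \<in> sets lebesgue"
  shows "(\<lambda>x. t + c *\<^sub>R x) ` S \<in> sets lebesgue"
proof -
  have "(\<lambda>z. (-(1/c) *\<^sub>R t) + (1/c) *\<^sub>R z) -` S \<inter> space lebesgue \<in> sets lebesgue"
    using assms(2) by measurable
  moreover have "(\<lambda>z. (-(1/c) *\<^sub>R t) + (1/c) *\<^sub>R z) = (\<lambda>z. (1/c) *\<^sub>R (z - t))"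
    by (simp add: fun_eq_iff algebra_simps)
  ultimately show ?thesis by (simp add: affine_image_eq_vimage[OF assms(1)])
qed

lemma integral_lebesgue_affine:
  fixes h :: "'a::euclidean_space \<Rightarrow> real"
  assumes c: "c \<noteq> 0" and int: "integrable lebesgue (\<lambda>x. h (t + c *\<^sub>R x))"
  shows "integrable lebesgue h"
    and "integral\<^sup>L lebesgue h = \<bar>c\<bar>^DIM('a) * integral\<^sup>L lebesgue (\<lambda>x. h (t + c *\<^sub>R x))"
proof -
  let ?T = "\<lambda>x::'a. t + c *\<^sub>R x"
  let ?K = "\<bar>c\<bar>^DIM('a)"
  have L: "lebesgue = density (distr lebesgue lebesgue ?T) (\<lambda>_. ennreal ?K)"
    using lebesgue_affine_euclidean[of "\<lambda>_. c" t] c unfolding affine_Basis_sum_eq by simp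
  have "(\<lambda>z. h (?T ((-(1/c) *\<^sub>R t) + (1/c) *\<^sub>R z))) \<in> borel_measurable lebesgue"
    using borel_measurable_integrable[OF int] by measurable
  moreover have "?T ((-(1/c) *\<^sub>R t) + (1/c) *\<^sub>R z) = z" for z
    using c by (simp add: algebra_simps)
  ultimately have [measurable]: "h \<in> borel_measurable lebesgue" by simp
  have "integrable lebesgue h \<longleftrightarrow> integrable (distr lebesgue lebesgue ?T) (\<lambda>x. ?K *\<^sub>R h x)"
    by (subst L) (rule integrable_density; simp)
  also have "\<dots> \<longleftrightarrow> integrable lebesgue (\<lambda>x. ?K *\<^sub>R h (?T x))"
    by (rule integrable_distr_eq) auto
  finally show "integrable lebesgue h"
    using int by (auto intro: integrable_scaleR_right)
  have "integral\<^sup>L lebesgue h = integral\<^sup>L (distr lebesgue lebesgue ?T) (\<lambda>x. ?K *\<^sub>R h x)"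
    by (subst L) (rule integral_density; simp)
  also have "\<dots> = integral\<^sup>L lebesgue (\<lambda>x. ?K *\<^sub>R h (?T x))"
    by (rule integral_distr) auto
  finally show "integral\<^sup>L lebesgue h = ?K * integral\<^sup>L lebesgue (\<lambda>x. h (?T x))" by simp
qed

lemma set_integral_affine_image:
  fixes g :: "'a::euclidean_space \<Rightarrow> real"
  assumes c: "c \<noteq> 0" and int: "set_integrable lebesgue S (\<lambda>x. g (t + c *\<^sub>R x))"
  shows "set_integrable lebesgue ((\<lambda>x. t + c *\<^sub>R x) ` S) g"
    and "(LINT z:(\<lambda>x. t + c *\<^sub>R x) ` S|lebesgue. g z)
           = \<bar>c\<bar>^DIM('a) * (LINT x:S|lebesgue. g (t + c *\<^sub>R x))"
proof -
  let ?h = "\<lambda>z. indicator ((\<lambda>x. t + c *\<^sub>R x) ` S) z *\<^sub>R g z"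
  have inj: "inj (\<lambda>x::'a. t + c *\<^sub>R x)"
    using c by (intro injI) simp
  have "(\<lambda>x. ?h (t + c *\<^sub>R x)) = (\<lambda>x. indicator S x *\<^sub>R g (t + c *\<^sub>R x))"
    by (simp add: fun_eq_iff indicator_def inj_image_mem_iff[OF inj])
  then have "integrable lebesgue (\<lambda>x. ?h (t + c *\<^sub>R x))"
    and "integral\<^sup>L lebesgue (\<lambda>x. ?h (t + c *\<^sub>R x)) = (LINT x:S|lebesgue. g (t + c *\<^sub>R x))"
    using int unfolding set_integrable_def set_lebesgue_integral_def by simp_all
  from integral_lebesgue_affine[OF c this(1)] this(2)
  show "set_integrable lebesgue ((\<lambda>x. t + c *\<^sub>R x) ` S) g"
    and "(LINT z:(\<lambda>x. t + c *\<^sub>R x) ` S|lebesgue. g z)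
           = \<bar>c\<bar>^DIM('a) * (LINT x:S|lebesgue. g (t + c *\<^sub>R x))"
    unfolding set_integrable_def set_lebesgue_integral_def by simp_all
qed

lemma AE_lebesgue_affine_pullback:
  fixes t :: "'a::euclidean_space"
  assumes c: "c \<noteq> 0" and ae: "AE y in lebesgue. \<Phi> y"
  shows "AE z in lebesgue. \<Phi> (t + c *\<^sub>R z)"
proof -
  obtain M where M: "{y. \<not> \<Phi> y} \<subseteq> M" "M \<in> null_sets lebesgue"
    using ae by (auto elim!: AE_E simp: null_sets_def)
  let ?M' = "(\<lambda>y. (1/c) *\<^sub>R y + (- (1/c) *\<^sub>R t)) ` M"
  have "emeasure lebesgue ?M' = 0"
    using M(2) emeasure_lebesgue_affine[of "1/c" "- (1/c) *\<^sub>R t" M] by (simp add: null_sets_def)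
  moreover have "?M' \<in> sets lebesgue"
    using sets_lebesgue_affine_image[of "1/c" M "- (1/c) *\<^sub>R t"] c null_setsD2[OF M(2)]
    by (simp add: add.commute)
  moreover have "{z. \<not> \<Phi> (t + c *\<^sub>R z)} \<subseteq> ?M'"
  proof
    fix z assume "z \<in> {z. \<not> \<Phi> (t + c *\<^sub>R z)}"
    then have "t + c *\<^sub>R z \<in> M" using M(1) by blast
    moreover have "z = (1/c) *\<^sub>R (t + c *\<^sub>R z) + (- (1/c) *\<^sub>R t)"
      using c by (simp add: algebra_simps)
    ultimately show "z \<in> ?M'" by blast
  qed
  ultimately show ?thesis
    by (intro AE_I'[of ?M']) (auto simp: null_sets_def)
qed

lemma AE_Sup_AE_lower_bounds_le:
  fixes f :: "'a \<Rightarrow> ereal"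
  shows "AE x in M. Sup {c. AE x in M. c \<le> f x} \<le> f x"
proof -
  let ?A = "{c. AE x in M. c \<le> f x}"
  have "AE x in M. -\<infinity> \<le> f x" by (rule AE_I2) simp
  then have "?A \<noteq> {}" by blast
  then obtain g :: "nat \<Rightarrow> ereal" where g: "range g \<subseteq> ?A" "Sup ?A = (SUP i. g i)"
    by (meson Sup_countable_SUP)
  then have "\<forall>i. AE x in M. g i \<le> f x"
    by (simp add: image_subset_iff)
  then have "AE x in M. \<forall>i. g i \<le> f x"
    by (simp add: AE_all_countable)
  then show ?thesis
    unfolding g(2) by (rule eventually_mono) (simp add: SUP_le_iff)
qed

lemma AE_le_Inf_AE_upper_bounds:
  fixes f :: "'a \<Rightarrow> ereal"
  shows "AE x in M. f x \<le> Inf {c. AE x in M. f x \<le> c}"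
proof -
  let ?A = "{c. AE x in M. f x \<le> c}"
  have "AE x in M. f x \<le> \<infinity>" by (rule AE_I2) simp
  then have "?A \<noteq> {}" by blast
  then obtain g :: "nat \<Rightarrow> ereal" where g: "range g \<subseteq> ?A" "Inf ?A = (INF i. g i)"
    by (meson Inf_countable_INF)
  then have "\<forall>i. AE x in M. f x \<le> g i"
    by (simp add: image_subset_iff)
  then have "AE x in M. \<forall>i. f x \<le> g i"
    by (simp add: AE_all_countable)
  then show ?thesis
    unfolding g(2) by (rule eventually_mono) (simp add: le_INF_iff)
qed

lemma AE_ex_in_non_null:
  assumes "AE x in M. \<Phi> x" "B \<in> sets M" "emeasure M B \<noteq> 0"
  shows "\<exists>x\<in>B. \<Phi> x"
proof (rule ccontr)
  assume "\<not> (\<exists>x\<in>B. \<Phi> x)"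
  then have "AE x in M. x \<notin> B"
    using assms(1) by (auto elim: eventually_mono)
  moreover have "{x \<in> space M. x \<in> B} = B"
    using sets.sets_into_space[OF assms(2)] by auto
  ultimately show False
    using assms(2,3) by (simp add: AE_iff_measurable[OF _ refl])
qed

lemma cube_eq_Int: "cube b s = (\<Inter>i. {x. b$i \<le> x$i}) \<inter> (\<Inter>i. {x. x$i < b$i + s})"
  by (auto simp: cube_def)

lemma cube_borel: "cube b s \<in> sets borel"
proof -
  have "{x. b$i \<le> x$i} \<in> sets borel" for i
    by (rule borel_closed) (simp add: closed_Collect_le continuous_on_component)
  moreover have "{x. x$i < b$i + s} \<in> sets borel" for i
    by (rule borel_open) (simp add: open_Collect_less continuous_on_component)
  ultimately show ?thesis unfolding cube_eq_Int
    by (intro sets.Int sets.countable_INT') auto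
qed

lemma cube_lmeasurable: "cube b s \<in> lmeasurable"
proof (rule bounded_set_imp_lmeasurable)
  have "cube b s \<subseteq> cbox b (b + (\<chi> i. s))"
    by (auto simp: cube_def mem_box_cart less_imp_le)
  then show "bounded (cube b s)" by (rule bounded_subset[OF bounded_cbox])
  show "cube b s \<in> sets lebesgue"
    using cube_borel[of b s] by (intro sets_completionI_sets) simp
qed

lemma measure_cube_pos:
  assumes "s > 0"
  shows "measure lebesgue (cube b s) > 0"
proof -
  let ?m = "b + (\<chi> i. s/2)"
  have "ball ?m (s/2) \<subseteq> cube b s"
  proof
    fix x assume "x \<in> ball ?m (s/2)"
    then have A: "\<bar>(x - ?m)$i\<bar> < s/2" for i
      using component_le_norm_cart[of "x - ?m" i] by (simp add: dist_norm norm_minus_commute)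
    have "b$i < x$i \<and> x$i < b$i + s" for i
    proof -
      have "(x - ?m)$i = x$i - b$i - s/2" by simp
      then show ?thesis using A[of i] by (simp only: abs_less_iff) linarith
    qed
    then show "x \<in> cube b s" by (simp add: cube_def less_imp_le)
  qed
  then have "measure lebesgue (ball ?m (s/2)) \<le> measure lebesgue (cube b s)"
    by (intro measure_mono_fmeasurable) (auto simp: cube_lmeasurable)
  moreover have "measure lebesgue (ball ?m (s/2)) > 0"
    using content_ball_pos[of "s/2" ?m] assms by simp
  ultimately show ?thesis by linarith
qed

lemma cube_affine_image:
  assumes "r > 0"
  shows "(\<lambda>x. t + r *\<^sub>R x) ` cube b s = cube (t + r *\<^sub>R b) (r * s)"
proof (intro equalityI subsetI)
  fix z assume "z \<in> (\<lambda>x. t + r *\<^sub>R x) ` cube b s"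
  then obtain x where "x \<in> cube b s" "z = t + r *\<^sub>R x" by auto
  then show "z \<in> cube (t + r *\<^sub>R b) (r * s)"
    using assms by (auto simp: cube_def distrib_left[symmetric])
next
  fix z assume z: "z \<in> cube (t + r *\<^sub>R b) (r * s)"
  have "(1/r) *\<^sub>R (z - t) \<in> cube b s"
    using z assms by (auto simp: cube_def field_simps)
  moreover have "z = t + r *\<^sub>R ((1/r) *\<^sub>R (z - t))"
    using assms by simp
  ultimately show "z \<in> (\<lambda>x. t + r *\<^sub>R x) ` cube b s" by blast
qed

lemma cube_corner_unique:
  assumes "s > 0" "cube p s = cube q s"
  shows "p = q"
proof -
  have "p \<in> cube q s" "q \<in> cube p s"
    using assms by (auto simp: cube_def)
  then show ?thesis by (auto simp: cube_def vec_eq_iff intro: order.antisym)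
qed

section \<open>Dyadic cubes of a cube and of its child\<close>

locale dyadic_child =
  fixes a c :: "real^'n" and l :: real and j1 :: "'n \<Rightarrow> nat"
  assumes l_pos: "l > 0" and j1_lt: "\<And>i. j1 i < 2"
    and c_eq: "c = (1/2) *\<^sub>R a + (l/2) *\<^sub>R (\<chi> i. real (j1 i))"
begin

definition "N = (2::real) ^ CARD('n)"
definition "P = cube a l"
definition "\<phi> = (\<lambda>z::real^'n. c + (1/2) *\<^sub>R z)"
definition "P1 = \<phi> ` P"
definition "D = dyadic_subcubes a l"

abbreviation dcube :: "nat \<Rightarrow> ('n \<Rightarrow> nat) \<Rightarrow> (real^'n) set" where
  "dcube k j \<equiv> cube (a + (l/2^k) *\<^sub>R (\<chi> i. real (j i))) (l/2^k)"

lemma mem_dyadic_gen: "R \<in> dyadic_gen a l k \<longleftrightarrow> (\<exists>j. (\<forall>i. j i < 2^k) \<and> R = dcube k j)"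
  by (auto simp: dyadic_gen_def)

lemma P_eq_dcube: "P = dcube 0 (\<lambda>_. 0)"
proof -
  have "(\<chi> i. (0::real)) = (0::real^'n)" by (simp add: vec_eq_iff)
  then show ?thesis by (simp add: P_def)
qed

lemma phi_dcube: "\<phi> ` dcube k j = dcube (Suc k) (\<lambda>i. 2^k * j1 i + j i)"
proof -
  have "c + (1/2) *\<^sub>R (a + (l/2^k) *\<^sub>R (\<chi> i. real (j i)))
          = a + (l/2^Suc k) *\<^sub>R (\<chi> i. real (2^k * j1 i + j i))"
    by (simp add: c_eq vec_eq_iff field_simps)
  then show ?thesis
    using cube_affine_image[of "1/2" c] by (simp add: \<phi>_def mult.commute)
qed

lemma P1_eq_dcube: "P1 = dcube 1 j1"
  using phi_dcube[of 0 "\<lambda>_. 0"] by (simp add: P1_def P_eq_dcube)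

lemma phi_dyadic_gen: "R \<in> dyadic_gen a l k \<Longrightarrow> \<phi> ` R \<in> dyadic_gen a l (Suc k)"
proof -
  assume "R \<in> dyadic_gen a l k"
  then obtain j where j: "\<forall>i. j i < 2^k" "R = dcube k j"
    by (auto simp: mem_dyadic_gen)
  have "2^k * j1 i + j i < 2^Suc k" for i
  proof -
    have "2^k * j1 i \<le> (2::nat)^k"
      using j1_lt[of i] by simp
    moreover have "j i < 2^k" using j(1) by blast
    ultimately show ?thesis by (simp only: power_Suc)
  qed
  then show ?thesis
    unfolding j(2) phi_dcube mem_dyadic_gen by (intro exI[where x="\<lambda>i. 2^k * j1 i + j i"]) simp
qed

lemma dcube_Suc_disjoint_P1:
  assumes "j i div 2^k \<noteq> j1 i"
  shows "dcube (Suc k) j \<inter> P1 = {}"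
proof (rule ccontr)
  assume "dcube (Suc k) j \<inter> P1 \<noteq> {}"
  then obtain x where x: "x \<in> dcube (Suc k) j" "x \<in> P1" by blast
  define u where "u = l / 2^Suc k"
  have u: "u > 0" using l_pos by (simp add: u_def)
  have A: "a$i + u * real (j i) \<le> x$i" "x$i < a$i + u * real (j i) + u"
    using x(1) by (auto simp: cube_def u_def)
  have B: "a$i + u * 2^k * real (j1 i) \<le> x$i" "x$i < a$i + u * 2^k * real (j1 i) + u * 2^k"
    using x(2) by (auto simp: P1_eq_dcube cube_def u_def)
  have "u * real (j i) < u * (2^k * (real (j1 i) + 1))"
    using A B by (simp add: algebra_simps)
  then have "real (j i) < 2^k * (real (j1 i) + 1)"
    using u by simp
  then have "real (j i) < real (2^k * Suc (j1 i))"
    by (simp add: algebra_simps)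
  then have upper: "j i < 2^k * Suc (j1 i)" by (simp only: of_nat_less_iff)
  have "u * (2^k * real (j1 i)) < u * (real (j i) + 1)"
    using A B by (simp add: algebra_simps)
  then have "real (2^k * j1 i) < real (j i + 1)"
    using u by simp
  then have lower: "2^k * j1 i \<le> j i" by (simp only: of_nat_less_iff)
  have "j i div 2^k = j1 i"
    by (rule div_nat_eqI) (use upper lower in \<open>auto simp: mult.commute\<close>)
  with assms show False by simp
qed

lemma dyadic_gen_Suc_cases:
  assumes "R \<in> dyadic_gen a l (Suc k)"
  shows "(\<exists>R'\<in>dyadic_gen a l k. R = \<phi> ` R') \<or> R \<inter> P1 = {}"
proof -
  obtain j where j: "\<forall>i. j i < 2^Suc k" "R = dcube (Suc k) j"
    using assms by (auto simp: mem_dyadic_gen)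
  show ?thesis
  proof (cases "\<forall>i. j i div 2^k = j1 i")
    case True
    have "j = (\<lambda>i. 2^k * j1 i + j i mod 2^k)"
    proof
      fix i show "j i = 2^k * j1 i + j i mod 2^k"
        using True div_mult_mod_eq[of "j i" "2^k"] by (simp add: mult.commute)
    qed
    then have "R = \<phi> ` dcube k (\<lambda>i. j i mod 2^k)"
      unfolding phi_dcube j(2) by (rule arg_cong)
    moreover have "dcube k (\<lambda>i. j i mod 2^k) \<in> dyadic_gen a l k"
      unfolding mem_dyadic_gen by (intro exI[where x="\<lambda>i. j i mod 2^k"]) simp
    ultimately show ?thesis by blast
  next
    case False
    then show ?thesis using dcube_Suc_disjoint_P1 j(2) by blast
  qed
qed

lemma dcube_subset_P:
  assumes "\<forall>i. j i < 2^k"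
  shows "dcube k j \<subseteq> P"
proof
  fix x assume x: "x \<in> dcube k j"
  define u where "u = l / 2^k"
  have u: "u > 0" using l_pos by (simp add: u_def)
  have lu: "u * 2^k = l" by (simp add: u_def)
  have "a$i \<le> x$i \<and> x$i < a$i + l" for i
  proof -
    have A: "a$i + u * real (j i) \<le> x$i" "x$i < a$i + u * real (j i) + u"
      using x by (auto simp: cube_def u_def)
    have "j i + 1 \<le> 2^k" using assms by (simp add: Suc_le_eq)
    then have "real (j i + 1) \<le> real ((2::nat)^k)" by (simp only: of_nat_le_iff)
    then have "real (j i) + 1 \<le> 2^k" by simp
    then have "u * (real (j i) + 1) \<le> u * 2^k"
      using u by simp
    then have "u * real (j i) + u \<le> l"
      using lu by (simp add: distrib_left)
    moreover have "0 \<le> u * real (j i)" using u by simp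
    ultimately show ?thesis using A by linarith
  qed
  then show "x \<in> P" by (simp add: P_def cube_def)
qed

lemma P_in_D: "P \<in> D"
proof -
  have "P \<in> dyadic_gen a l 0"
    unfolding P_eq_dcube mem_dyadic_gen by (intro exI[where x="\<lambda>_. 0"]) simp
  then show ?thesis unfolding D_def dyadic_subcubes_def by blast
qed

lemma phi_in_D: "R \<in> D \<Longrightarrow> \<phi> ` R \<in> D"
  unfolding D_def dyadic_subcubes_def using phi_dyadic_gen by blast

lemma D_subset_P: "R \<in> D \<Longrightarrow> R \<subseteq> P"
  by (auto simp: D_def dyadic_subcubes_def mem_dyadic_gen dest!: dcube_subset_P)

lemma D_cube: "R \<in> D \<Longrightarrow> \<exists>b s. s > 0 \<and> R = cube b s"
  using l_pos by (auto simp: D_def dyadic_subcubes_def mem_dyadic_gen intro!: exI[of _ "l/2^_"])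

lemma D_cases:
  assumes "R \<in> D"
  obtains "R = P" | R' where "R' \<in> D" "R = \<phi> ` R'" | "R \<inter> P1 = {}"
proof -
  obtain k where k: "R \<in> dyadic_gen a l k"
    using assms by (auto simp: D_def dyadic_subcubes_def)
  show ?thesis
  proof (cases k)
    case 0
    then show ?thesis using k that(1) by (auto simp: mem_dyadic_gen P_eq_dcube)
  next
    case (Suc m)
    then show ?thesis
      using dyadic_gen_Suc_cases[of R m] k that(2,3) by (auto simp: D_def dyadic_subcubes_def)
  qed
qed

lemma P_lmeasurable: "P \<in> lmeasurable"
  by (simp add: P_def cube_lmeasurable)

lemma P_sets: "P \<in> sets lebesgue"
  using P_lmeasurable by (rule fmeasurableD)

lemma measure_P_pos: "measure lebesgue P > 0"
  using l_pos by (simp add: P_def measure_cube_pos)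

lemma N_ge_2: "N \<ge> 2"
proof -
  have "(2::real)^1 \<le> 2^CARD('n)"
    by (rule power_increasing) (simp_all add: Suc_leI)
  then show ?thesis by (simp add: N_def)
qed

lemma measure_phi_image: "measure lebesgue (\<phi> ` S) = measure lebesgue S / N"
  using measure_lebesgue_affine[of "1/2" c S]
  by (simp add: \<phi>_def N_def add.commute power_one_over)

lemma inv_phi: "2 *\<^sub>R (\<phi> y - c) = y"
  by (simp add: \<phi>_def)

lemma inj_phi: "inj \<phi>"
  by (metis inv_phi injI)

lemma sets_phi_image: "S \<in> sets lebesgue \<Longrightarrow> \<phi> ` S \<in> sets lebesgue"
  unfolding \<phi>_def by (rule sets_lebesgue_affine_image) simp

lemma D_lmeasurable: "R \<in> D \<Longrightarrow> R \<in> lmeasurable"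
  using D_cube cube_lmeasurable by metis

lemma D_measure_pos: "R \<in> D \<Longrightarrow> measure lebesgue R > 0"
  using D_cube measure_cube_pos by blast

lemma P1_subset_P: "P1 \<subseteq> P"
  unfolding P1_def using P_in_D phi_in_D D_subset_P by blast

lemma P1_sets: "P1 \<in> sets lebesgue"
  unfolding P1_def by (rule sets_phi_image[OF P_sets])

lemma phi_image_subset_P1: "R \<subseteq> P \<Longrightarrow> \<phi> ` R \<subseteq> P1"
  by (auto simp: P1_def)

lemma measure_P_minus_P1: "measure lebesgue (P - P1) = measure lebesgue P - measure lebesgue P / N"
  using measure_Diff[of lebesgue P P1] fmeasurableD2[OF P_lmeasurable] P_sets P1_sets P1_subset_P
  by (simp add: P1_def measure_phi_image)

lemma emeasure_P_minus_P1_nonzero: "emeasure lebesgue (P - P1) \<noteq> 0"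
proof -
  have "measure lebesgue P / N < measure lebesgue P"
    using measure_P_pos N_ge_2 by (simp add: divide_less_eq)
  then have "measure lebesgue (P - P1) \<noteq> 0"
    by (simp add: measure_P_minus_P1)
  then show ?thesis by (auto simp: measure_def)
qed

lemma AE_ex_in_P_minus_P1:
  assumes "AE z in lebesgue_on P. \<Phi> z"
  shows "\<exists>z\<in>P - P1. \<Phi> z"
proof -
  have "AE z in lebesgue. z \<in> P \<longrightarrow> \<Phi> z"
    using assms P_sets by (simp add: AE_restrict_space_iff)
  then obtain z where "z \<in> P - P1" "z \<in> P \<longrightarrow> \<Phi> z"
    using AE_ex_in_non_null[of _ lebesgue "P - P1"] P_sets P1_sets emeasure_P_minus_P1_nonzero
    by (metis (no_types, lifting) sets.Diff)
  then show ?thesis by blast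
qed

lemma avg_indicator:
  assumes "E \<subseteq> P" "E \<in> sets lebesgue"
  shows "avg (indicator E) P = measure lebesgue E / measure lebesgue P"
proof -
  have "wmeas (indicator E) P = integral\<^sup>L lebesgue (indicator E :: _ \<Rightarrow> real)"
    unfolding wmeas_def set_lebesgue_integral_def using assms(1)
    by (intro Bochner_Integration.integral_cong) (auto simp: indicator_def)
  then show ?thesis
    using assms(2) by (simp add: avg_def)
qed

end

section \<open>The operator T\<close>

locale weight_transfer = dyadic_child a c l j1
  for a c :: "real^'n" and l :: real and j1 :: "'n \<Rightarrow> nat" +
  fixes Q :: real
  assumes Q_ge_1: "Q \<ge> 1"
begin

definition "\<alpha> = (N * Q - (N - 1)) / Q"
definition "T w = Top N Q c P1 w"

text \<open>The invariant of the iteration: \<open>\<langle>w\<rangle>\<^sub>P = Q\<close> together with the upper halves of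
  \<open>[w]\<^sub>A\<^sub>1 = Q\<close> and \<open>ess inf w = 1\<close>. The lower halves need not be carried along: they hold
  for every \<open>T w\<close>, because \<open>T w = 1\<close> and \<open>M(T w) = Q\<close> on \<open>P - P1\<close>.\<close>
definition A1_normalized :: "(real^'n \<Rightarrow> real) \<Rightarrow> bool" where
  "A1_normalized w \<longleftrightarrow> (\<forall>z\<in>P. 0 \<le> w z) \<and> set_integrable lebesgue P w \<and> avg w P = Q \<and>
     (AE z in lebesgue. z \<in> P \<longrightarrow> 1 \<le> w z \<and> dyadic_max a l w z \<le> ereal (Q * w z))"

lemma Q_pos: "Q > 0"
  using Q_ge_1 by simp

lemma alpha_ge_1: "\<alpha> \<ge> 1"
proof -
  have "(N - 1) * 1 \<le> (N - 1) * Q"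
    using N_ge_2 Q_ge_1 by (intro mult_left_mono) auto
  then show ?thesis
    using Q_pos by (simp add: \<alpha>_def le_divide_eq algebra_simps)
qed

lemma alpha_div_N: "\<alpha> / N = 1 - (N - 1) / (N * Q)"
  using N_ge_2 Q_pos by (simp add: \<alpha>_def field_simps)

lemma T_phi: "y \<in> P \<Longrightarrow> T w (\<phi> y) = \<alpha> * w y"
  by (simp add: T_def Top_def P1_def \<alpha>_def inv_phi)

lemma T_outside: "z \<notin> P1 \<Longrightarrow> T w z = 1"
  by (simp add: T_def Top_def)

lemma T_nonneg:
  assumes "\<forall>z\<in>P. 0 \<le> w z" "z \<in> P"
  shows "0 \<le> T w z"
proof (cases "z \<in> P1")
  case True
  then obtain y where "y \<in> P" "z = \<phi> y" by (auto simp: P1_def)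
  then show ?thesis using T_phi[of y w] assms alpha_ge_1 by simp
qed (simp add: T_outside)

lemma avg_abs:
  assumes "R \<in> sets lebesgue" "R \<subseteq> P" "\<forall>z\<in>P. 0 \<le> g z"
  shows "avg (\<lambda>x. \<bar>g x\<bar>) R = avg g R"
proof -
  have "wmeas (\<lambda>x. \<bar>g x\<bar>) R = wmeas g R"
    unfolding wmeas_def using assms by (intro set_lebesgue_integral_cong) auto
  then show ?thesis by (simp add: avg_def)
qed

lemma T_phi_image_integral:
  assumes wi: "set_integrable lebesgue P w" and R: "R \<subseteq> P" "R \<in> sets lebesgue"
  shows "set_integrable lebesgue (\<phi> ` R) (T w)"
    and "wmeas (T w) (\<phi> ` R) = \<alpha> / N * wmeas w R"
proof -
  have eq: "T w (c + (1/2) *\<^sub>R x) = \<alpha> * w x" if "x \<in> R" for x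
    using T_phi[of x w] that R(1) by (auto simp: \<phi>_def)
  have "set_integrable lebesgue R (\<lambda>x. \<alpha> * w x)"
    using set_integrable_subset[OF wi R(2,1)] by (rule set_integrable_mult_right)
  then have g: "set_integrable lebesgue R (\<lambda>x. T w (c + (1/2) *\<^sub>R x))"
    by (subst set_integrable_cong[OF refl refl eq]) auto
  have "(LINT x:R|lebesgue. T w (c + (1/2) *\<^sub>R x)) = \<alpha> * wmeas w R"
    unfolding wmeas_def using eq R(2)
    by (subst set_lebesgue_integral_cong[where g="\<lambda>x. \<alpha> * w x"]) auto
  then show "set_integrable lebesgue (\<phi> ` R) (T w)" "wmeas (T w) (\<phi> ` R) = \<alpha> / N * wmeas w R"
    using set_integral_affine_image[of "1/2" R "T w" c, OF _ g]
    unfolding \<phi>_def wmeas_def by (simp_all add: N_def power_one_over)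
qed

lemma T_integral_P:
  assumes wi: "set_integrable lebesgue P w"
  shows "set_integrable lebesgue P (T w)"
    and "wmeas (T w) P = \<alpha> / N * wmeas w P + (measure lebesgue P - measure lebesgue P / N)"
proof -
  have A: "set_integrable lebesgue P1 (T w)" "wmeas (T w) P1 = \<alpha> / N * wmeas w P"
    using T_phi_image_integral[OF wi subset_refl P_sets] by (simp_all add: P1_def)
  have DL: "P - P1 \<in> sets lebesgue" using P_sets P1_sets by auto
  have "emeasure lebesgue P < \<infinity>"
    using fmeasurableD2[OF P_lmeasurable] by (simp add: less_top)
  then have DF: "emeasure lebesgue (P - P1) < \<infinity>"
    using emeasure_mono[of "P - P1" P lebesgue] P_sets by (meson Diff_subset le_less_trans)
  have T1: "\<forall>x\<in>P - P1. T w x = 1" by (simp add: T_outside)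
  have "set_integrable lebesgue (P - P1) (\<lambda>_. 1::real)"
    unfolding set_integrable_def using DL DF by simp
  then have B: "set_integrable lebesgue (P - P1) (T w)"
    by (subst set_integrable_cong[OF refl refl, where f'="\<lambda>_. 1"]) (auto simp: T_outside)
  have B2: "wmeas (T w) (P - P1) = measure lebesgue (P - P1)"
  proof -
    have "wmeas (T w) (P - P1) = (LINT x:(P - P1)|lebesgue. (1::real))"
      unfolding wmeas_def using DL T1 by (intro set_lebesgue_integral_cong) auto
    then show ?thesis using DL DF by (simp add: set_integral_const)
  qed
  have PU: "P = P1 \<union> (P - P1)" using P1_subset_P by auto
  show "set_integrable lebesgue P (T w)"
    using set_integrable_Un[OF A(1) B P1_sets DL] PU by simp
  have "wmeas (T w) P = wmeas (T w) P1 + wmeas (T w) (P - P1)"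
    unfolding wmeas_def using set_integral_Un[of P1 "P - P1" lebesgue "T w"] A(1) B PU by auto
  then show "wmeas (T w) P = \<alpha> / N * wmeas w P + (measure lebesgue P - measure lebesgue P / N)"
    using A(2) B2 measure_P_minus_P1 by simp
qed

lemma avg_T_P:
  assumes wi: "set_integrable lebesgue P w" and av: "avg w P = Q"
  shows "avg (T w) P = Q"
proof -
  let ?m = "measure lebesgue P"
  have "wmeas w P = Q * ?m" using av measure_P_pos by (simp add: avg_def field_simps)
  then have "wmeas (T w) P = \<alpha> / N * (Q * ?m) + (?m - ?m / N)"
    using T_integral_P(2)[OF wi] by simp
  also have "\<dots> = Q * ?m" using N_ge_2 Q_pos by (simp add: \<alpha>_def field_simps)
  finally show ?thesis using measure_P_pos by (simp add: avg_def)
qed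

lemma dyadic_max_eq_SUP_D: "dyadic_max a l g z = (SUP R \<in> {R \<in> D. z \<in> R}. ereal (avg (\<lambda>x. \<bar>g x\<bar>) R))"
  by (simp add: dyadic_max_def D_def)

lemma avg_abs_T_P:
  assumes "\<forall>z\<in>P. 0 \<le> w z" "set_integrable lebesgue P w" "avg w P = Q"
  shows "avg (\<lambda>x. \<bar>T w x\<bar>) P = Q"
  using avg_abs[OF P_sets subset_refl] T_nonneg[OF assms(1)] avg_T_P[OF assms(2,3)] by simp

lemma avg_abs_T_disjoint_P1:
  assumes R: "R \<in> D" "R \<inter> P1 = {}"
  shows "avg (\<lambda>x. \<bar>T w x\<bar>) R = 1"
proof -
  have "wmeas (\<lambda>x. \<bar>T w x\<bar>) R = (LINT x:R|lebesgue. (1::real))"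
  proof -
    have "\<forall>x\<in>R. x \<notin> P1" using R(2) by blast
    then show ?thesis
      unfolding wmeas_def using D_lmeasurable[OF R(1)] by (intro set_lebesgue_integral_cong) (auto simp: T_outside)
  qed
  also have "\<dots> = measure lebesgue R"
    using set_integral_const[of R lebesgue "1::real"] D_lmeasurable[OF R(1)]
      fmeasurableD2[OF D_lmeasurable[OF R(1)]] by auto
  finally show ?thesis using D_measure_pos[OF R(1)] by (simp add: avg_def)
qed

lemma avg_abs_T_phi_image:
  assumes wn: "\<forall>z\<in>P. 0 \<le> w z" and wi: "set_integrable lebesgue P w" and R: "R \<in> D"
  shows "avg (\<lambda>x. \<bar>T w x\<bar>) (\<phi> ` R) = \<alpha> * avg (\<lambda>x. \<bar>w x\<bar>) R"
proof -
  have RP: "R \<subseteq> P" "R \<in> sets lebesgue" using R D_subset_P D_lmeasurable by auto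
  have "avg (\<lambda>x. \<bar>T w x\<bar>) (\<phi> ` R) = avg (T w) (\<phi> ` R)"
    using avg_abs sets_phi_image[OF RP(2)] phi_image_subset_P1[OF RP(1)] P1_subset_P T_nonneg[OF wn]
    by blast
  also have "\<dots> = \<alpha> / N * wmeas w R / (measure lebesgue R / N)"
    using T_phi_image_integral(2)[OF wi RP] by (simp add: avg_def measure_phi_image)
  also have "\<dots> = \<alpha> * avg w R"
    using N_ge_2 by (simp add: avg_def)
  also have "avg w R = avg (\<lambda>x. \<bar>w x\<bar>) R"
    using avg_abs[OF RP(2,1) wn] by simp
  finally show ?thesis .
qed

lemma dyadic_max_T_outside_P1:
  assumes "\<forall>z\<in>P. 0 \<le> w z" "set_integrable lebesgue P w" "avg w P = Q"
    and z: "z \<in> P" "z \<notin> P1"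
  shows "dyadic_max a l (T w) z = ereal Q"
proof (rule order.antisym)
  show "dyadic_max a l (T w) z \<le> ereal Q"
    unfolding dyadic_max_eq_SUP_D
  proof (rule SUP_least)
    fix R assume R: "R \<in> {R \<in> D. z \<in> R}"
    then consider "R = P" | R' where "R' \<in> D" "R = \<phi> ` R'" | "R \<inter> P1 = {}"
      by (auto elim: D_cases)
    then show "ereal (avg (\<lambda>x. \<bar>T w x\<bar>) R) \<le> ereal Q"
    proof cases
      case 2
      then have "R \<subseteq> P1" using phi_image_subset_P1 D_subset_P by blast
      then show ?thesis using R z by blast
    qed (use avg_abs_T_P[OF assms(1-3)] avg_abs_T_disjoint_P1 R Q_ge_1 in auto)
  qed
  have "ereal (avg (\<lambda>x. \<bar>T w x\<bar>) P) \<le> dyadic_max a l (T w) z"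
    unfolding dyadic_max_eq_SUP_D using P_in_D z(1) by (intro SUP_upper) auto
  then show "ereal Q \<le> dyadic_max a l (T w) z"
    using avg_abs_T_P[OF assms(1-3)] by simp
qed

lemma dyadic_max_T_phi:
  assumes wn: "\<forall>z\<in>P. 0 \<le> w z" and wi: "set_integrable lebesgue P w" and av: "avg w P = Q"
    and y: "y \<in> P"
  shows "dyadic_max a l (T w) (\<phi> y) \<le> max (ereal Q) (ereal \<alpha> * dyadic_max a l w y)"
  unfolding dyadic_max_eq_SUP_D[of "T w"]
proof (rule SUP_least)
  fix R assume "R \<in> {R \<in> D. \<phi> y \<in> R}"
  then have R: "R \<in> D" "\<phi> y \<in> R" by auto
  from R(1) consider "R = P" | R' where "R' \<in> D" "R = \<phi> ` R'" | "R \<inter> P1 = {}"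
    by (rule D_cases)
  then show "ereal (avg (\<lambda>x. \<bar>T w x\<bar>) R) \<le> max (ereal Q) (ereal \<alpha> * dyadic_max a l w y)"
  proof cases
    case 1
    then show ?thesis using avg_abs_T_P[OF wn wi av] by simp
  next
    case 2
    then have yR: "y \<in> R'" using R(2) inj_phi by (auto simp: inj_image_mem_iff)
    have "ereal (avg (\<lambda>x. \<bar>T w x\<bar>) R) = ereal \<alpha> * ereal (avg (\<lambda>x. \<bar>w x\<bar>) R')"
      using avg_abs_T_phi_image[OF wn wi 2(1)] 2(2) by simp
    also have "\<dots> \<le> ereal \<alpha> * dyadic_max a l w y"
      unfolding dyadic_max_eq_SUP_D using alpha_ge_1 yR 2(1)
      by (intro ereal_mult_left_mono SUP_upper) auto
    finally show ?thesis by (simp add: le_max_iff_disj)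
  next
    case 3
    then show ?thesis using R(2) y by (auto simp: P1_def)
  qed
qed

lemma A1_bound_T_phi:
  assumes "\<forall>z\<in>P. 0 \<le> w z" "set_integrable lebesgue P w" "avg w P = Q"
    and y: "y \<in> P" and w1: "1 \<le> w y" and Mw: "dyadic_max a l w y \<le> ereal (Q * w y)"
  shows "1 \<le> T w (\<phi> y) \<and> dyadic_max a l (T w) (\<phi> y) \<le> ereal (Q * T w (\<phi> y))"
proof -
  have aw: "1 \<le> \<alpha> * w y"
    using alpha_ge_1 w1 by (metis mult_mono' mult_1_left zero_le_one order.trans)
  have "dyadic_max a l (T w) (\<phi> y) \<le> max (ereal Q) (ereal \<alpha> * dyadic_max a l w y)"
    by (rule dyadic_max_T_phi[OF assms(1-4)])
  also have "\<dots> \<le> ereal (Q * (\<alpha> * w y))"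
  proof (rule max.boundedI)
    show "ereal Q \<le> ereal (Q * (\<alpha> * w y))"
      using aw Q_pos by simp
    have "ereal \<alpha> * dyadic_max a l w y \<le> ereal \<alpha> * ereal (Q * w y)"
      using Mw alpha_ge_1 by (intro ereal_mult_left_mono) auto
    then show "ereal \<alpha> * dyadic_max a l w y \<le> ereal (Q * (\<alpha> * w y))"
      by (simp add: ac_simps)
  qed
  finally show ?thesis
    using T_phi[OF y] aw by simp
qed

lemma AE_A1_bound_T:
  assumes "A1_normalized w"
  shows "AE z in lebesgue. z \<in> P \<longrightarrow> 1 \<le> T w z \<and> dyadic_max a l (T w) z \<le> ereal (Q * T w z)"
proof -
  note w = assms[unfolded A1_normalized_def]
  let ?\<psi> = "\<lambda>z. (-2) *\<^sub>R c + 2 *\<^sub>R z"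
  have "AE z in lebesgue. ?\<psi> z \<in> P \<longrightarrow> 1 \<le> w (?\<psi> z) \<and> dyadic_max a l w (?\<psi> z) \<le> ereal (Q * w (?\<psi> z))"
    using w by (intro AE_lebesgue_affine_pullback) auto
  then show ?thesis
  proof (rule eventually_mono, intro impI)
    fix z
    assume H: "?\<psi> z \<in> P \<longrightarrow> 1 \<le> w (?\<psi> z) \<and> dyadic_max a l w (?\<psi> z) \<le> ereal (Q * w (?\<psi> z))"
      and "z \<in> P"
    show "1 \<le> T w z \<and> dyadic_max a l (T w) z \<le> ereal (Q * T w z)"
    proof (cases "z \<in> P1")
      case True
      then obtain y where y: "y \<in> P" "z = \<phi> y" by (auto simp: P1_def)
      moreover have "?\<psi> z = y" using y(2) by (simp add: \<phi>_def algebra_simps)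
      ultimately show ?thesis
        using A1_bound_T_phi w H by auto
    next
      case False
      then show ?thesis
        using dyadic_max_T_outside_P1 w \<open>z \<in> P\<close> Q_ge_1 by (simp add: T_outside)
    qed
  qed
qed

lemma A1_normalized_T: "A1_normalized w \<Longrightarrow> A1_normalized (T w)"
  using T_nonneg T_integral_P(1) avg_T_P AE_A1_bound_T
  unfolding A1_normalized_def by blast

lemma A1_const_T:
  assumes "A1_normalized w"
  shows "A1_const a l (T w) = ereal Q"
  unfolding A1_const_def ess_sup_on_def P_def[symmetric]
proof (rule order.antisym)
  have "AE z in lebesgue_on P. dyadic_max a l (T w) z / ereal (T w z) \<le> ereal Q"
  proof -
    have "dyadic_max a l (T w) z / ereal (T w z) \<le> ereal Q"
      if "1 \<le> T w z" "dyadic_max a l (T w) z \<le> ereal (Q * T w z)" for z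
      using that by (subst ereal_divide_le_pos) (auto simp: ac_simps)
    then show ?thesis
      using AE_A1_bound_T[OF assms] P_sets
      by (auto simp: AE_restrict_space_iff elim: eventually_mono)
  qed
  then show "Inf {c. AE z in lebesgue_on P. dyadic_max a l (T w) z / ereal (T w z) \<le> c} \<le> ereal Q"
    by (intro Inf_lower) simp
next
  note w = assms[unfolded A1_normalized_def]
  show "ereal Q \<le> Inf {c. AE z in lebesgue_on P. dyadic_max a l (T w) z / ereal (T w z) \<le> c}"
  proof (rule Inf_greatest)
    fix q assume "q \<in> {c. AE z in lebesgue_on P. dyadic_max a l (T w) z / ereal (T w z) \<le> c}"
    then obtain z where "z \<in> P - P1" "dyadic_max a l (T w) z / ereal (T w z) \<le> q"
      using AE_ex_in_P_minus_P1 by blast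
    then show "ereal Q \<le> q"
      using dyadic_max_T_outside_P1 w by (simp add: T_outside)
  qed
qed

lemma ess_inf_T:
  assumes "A1_normalized w"
  shows "ess_inf_on P (\<lambda>z. ereal (T w z)) = 1"
  unfolding ess_inf_on_def
proof (rule order.antisym)
  show "Sup {q. AE z in lebesgue_on P. q \<le> ereal (T w z)} \<le> 1"
  proof (rule Sup_least)
    fix q assume "q \<in> {q. AE z in lebesgue_on P. q \<le> ereal (T w z)}"
    then obtain z where "z \<in> P - P1" "q \<le> ereal (T w z)"
      using AE_ex_in_P_minus_P1 by blast
    then show "q \<le> 1" by (simp add: T_outside one_ereal_def)
  qed
  have "AE z in lebesgue_on P. 1 \<le> ereal (T w z)"
    using AE_A1_bound_T[OF assms] P_sets
    by (auto simp: AE_restrict_space_iff elim: eventually_mono)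
  then show "1 \<le> Sup {q. AE z in lebesgue_on P. q \<le> ereal (T w z)}"
    by (intro Sup_upper) simp
qed

lemma A1_normalized_if_A1_const:
  assumes "\<forall>z\<in>P. 0 \<le> w z" "set_integrable lebesgue P w" "avg w P = Q"
    and ess_inf: "ess_inf_on P (\<lambda>z. ereal (w z)) = 1" and A1: "A1_const a l w = ereal Q"
  shows "A1_normalized w"
proof -
  have "AE z in lebesgue_on P. ereal 1 \<le> ereal (w z)"
    using AE_Sup_AE_lower_bounds_le[where M="lebesgue_on P" and f="\<lambda>z. ereal (w z)"] ess_inf
    unfolding ess_inf_on_def by simp
  moreover have "AE z in lebesgue_on P. dyadic_max a l w z / ereal (w z) \<le> ereal Q"
    using AE_le_Inf_AE_upper_bounds[where M="lebesgue_on P" and f="\<lambda>z. dyadic_max a l w z / ereal (w z)"] A1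
    unfolding A1_const_def ess_sup_on_def P_def[symmetric] by simp
  ultimately have "AE z in lebesgue_on P. 1 \<le> w z \<and> dyadic_max a l w z \<le> ereal (Q * w z)"
  proof eventually_elim
    case (elim z)
    then have "dyadic_max a l w z \<le> ereal (w z) * ereal Q"
      by (subst ereal_divide_le_pos[symmetric]) auto
    then show ?case using elim(1) by (simp add: ac_simps)
  qed
  then have "AE z in lebesgue. z \<in> P \<longrightarrow> 1 \<le> w z \<and> dyadic_max a l w z \<le> ereal (Q * w z)"
    using P_sets by (intro AE_restrict_space_iff[THEN iffD1]) auto
  then show ?thesis
    using assms(1-3) by (simp add: A1_normalized_def)
qed

lemma A1_normalized_iterate: "A1_normalized w \<Longrightarrow> A1_normalized ((T^^k) w)"
  by (induction k) (auto simp: A1_normalized_T)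

lemma A1_const_ess_inf_iterate_T:
  assumes "A1_normalized w" "A1_const a l w = ereal Q" "ess_inf_on P (\<lambda>z. ereal (w z)) = 1"
  shows "A1_const a l ((T^^k) w) = ereal Q \<and> ess_inf_on P (\<lambda>z. ereal ((T^^k) w z)) = 1"
proof (cases k)
  case (Suc m)
  then show ?thesis
    using A1_normalized_iterate[OF assms(1), of m] by (simp add: A1_const_T ess_inf_T)
qed (use assms in simp)

lemma iterate_phi_image_measure:
  "(\<phi>^^k) ` P \<subseteq> P \<and> (\<phi>^^k) ` P \<in> sets lebesgue
     \<and> measure lebesgue ((\<phi>^^k) ` P) = measure lebesgue P / N^k"
proof (induction k)
  case (Suc k)
  have "(\<phi>^^Suc k) ` P = \<phi> ` (\<phi>^^k) ` P" by (simp add: image_comp)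
  moreover have "\<phi> ` (\<phi>^^k) ` P \<subseteq> P"
    using Suc phi_image_subset_P1 P1_subset_P by blast
  ultimately show ?case
    using Suc sets_phi_image measure_phi_image[of "(\<phi>^^k) ` P"] by (simp add: field_simps)
qed (simp add: P_sets)

lemma wmeas_iterate_T_phi_image:
  assumes "A1_normalized w"
  shows "wmeas ((T^^k) w) ((\<phi>^^k) ` P) = (\<alpha> / N)^k * wmeas w P"
proof (induction k)
  case (Suc k)
  have "set_integrable lebesgue P ((T^^k) w)"
    using A1_normalized_iterate[OF assms] by (simp add: A1_normalized_def)
  then have "wmeas (T ((T^^k) w)) (\<phi> ` (\<phi>^^k) ` P) = \<alpha> / N * wmeas ((T^^k) w) ((\<phi>^^k) ` P)"
    using T_phi_image_integral(2) iterate_phi_image_measure by blast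
  then show ?case
    using Suc by (simp add: image_comp)
qed simp

end

lemma dyadic_child_if_image_child:
  fixes a c :: "real^'n"
  assumes l: "l > 0" and child: "P1 \<in> dyadic_gen a l 1"
    and onto: "(\<lambda>z. c + (1/2) *\<^sub>R z) ` cube a l = P1"
  obtains j1 where "dyadic_child a c l j1"
proof -
  obtain j1 where j1: "\<forall>i. j1 i < 2" and P1: "P1 = cube (a + (l/2) *\<^sub>R (\<chi> i. real (j1 i))) (l/2)"
    using child unfolding dyadic_gen_def by auto
  have "cube (c + (1/2) *\<^sub>R a) (l/2) = cube (a + (l/2) *\<^sub>R (\<chi> i. real (j1 i))) (l/2)"
    using cube_affine_image[of "1/2" c a l] onto P1 by simp
  then have "c + (1/2) *\<^sub>R a = a + (l/2) *\<^sub>R (\<chi> i. real (j1 i))"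
    by (rule cube_corner_unique[rotated]) (simp add: l)
  then have corner: "(c + (1/2) *\<^sub>R a)$i = (a + (l/2) *\<^sub>R (\<chi> i. real (j1 i)))$i" for i
    by simp
  have "c$i = ((1/2) *\<^sub>R a + (l/2) *\<^sub>R (\<chi> i. real (j1 i)))$i" for i
    using corner[of i] by simp
  then have "c = (1/2) *\<^sub>R a + (l/2) *\<^sub>R (\<chi> i. real (j1 i))"
    by (simp add: vec_eq_iff)
  then show ?thesis
    using l j1 by (intro that) (unfold_locales; simp)
qed

theorem mainTheorem6:
  fixes a c :: "real^'n" and l Q :: real and P1 :: "(real^'n) set"
    and w0 :: "real^'n \<Rightarrow> real"
  defines "N \<equiv> (2::real) ^ CARD('n)"
  defines "P \<equiv> cube a l"
  defines "\<phi> \<equiv> (\<lambda>z::real^'n. c + (1/2) *\<^sub>R z)"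
  defines "w \<equiv> (\<lambda>k. (Top N Q c P1 ^^ k) w0)"
  defines "E \<equiv> (\<lambda>k. (\<phi> ^^ k) ` P)"
  assumes l_pos: "l > 0"
    and Q_ge: "Q \<ge> 1"
    and P1_child: "P1 \<in> dyadic_gen a l 1"
    and phi_onto: "\<phi> ` P = P1"
    and w0_nonneg: "\<forall>z\<in>P. w0 z \<ge> 0"
    and w0_int: "set_integrable lebesgue P w0"
    and w0_avg: "avg w0 P = Q"
    and w0_inf: "ess_inf_on P (\<lambda>z. ereal (w0 z)) = 1"
    and w0_A1: "A1_const a l w0 = ereal Q"
  shows "\<forall>k. A1_const a l (w k) = ereal Q
           \<and> avg (w k) P = Q
           \<and> ess_inf_on P (\<lambda>z. ereal (w k z)) = 1
           \<and> avg (indicator (E k)) P = 1 / N ^ k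
           \<and> wmeas (w k) (E k) / measure lebesgue P = Q * (1 - (N - 1) / (N * Q)) ^ k"
proof
  fix k
  obtain j1 where "dyadic_child a c l j1"
    using dyadic_child_if_image_child l_pos P1_child phi_onto unfolding \<phi>_def P_def by blast
  then interpret W: weight_transfer a c l j1 Q
    using Q_ge by (simp add: weight_transfer_def weight_transfer_axioms_def)
  have [simp]: "W.N = N" "W.P = P" "W.\<phi> = \<phi>" "W.P1 = P1"
    using phi_onto by (simp_all add: W.N_def N_def W.P_def P_def W.\<phi>_def \<phi>_def W.P1_def)
  have w: "w k = (W.T^^k) w0" and E: "E k = (\<phi>^^k) ` P"
    by (simp_all add: w_def E_def W.T_def[abs_def])
  have w0: "W.A1_normalized w0"
    using W.A1_normalized_if_A1_const w0_nonneg w0_int w0_avg w0_inf w0_A1 by simp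
  have "wmeas w0 P = Q * measure lebesgue P"
    using w0_avg W.measure_P_pos by (simp add: avg_def field_simps)
  then have "wmeas (w k) (E k) / measure lebesgue P = Q * (1 - (N - 1) / (N * Q)) ^ k"
    using W.wmeas_iterate_T_phi_image[OF w0, of k] W.measure_P_pos W.alpha_div_N by (simp add: w E)
  moreover have "A1_const a l (w k) = ereal Q \<and> ess_inf_on P (\<lambda>z. ereal (w k z)) = 1"
    using W.A1_const_ess_inf_iterate_T[OF w0 w0_A1] w0_inf by (simp add: w)
  moreover have "avg (w k) P = Q"
    using W.A1_normalized_iterate[OF w0, of k] by (simp add: w W.A1_normalized_def)
  moreover have "avg (indicator (E k)) P = 1 / N ^ k"
    using W.avg_indicator[of "E k"] W.iterate_phi_image_measure[of k] W.measure_P_pos by (simp add: E)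
  ultimately show "A1_const a l (w k) = ereal Q \<and> avg (w k) P = Q \<and> ess_inf_on P (\<lambda>z. ereal (w k z)) = 1
           \<and> avg (indicator (E k)) P = 1 / N ^ k
           \<and> wmeas (w k) (E k) / measure lebesgue P = Q * (1 - (N - 1) / (N * Q)) ^ k"
    by blast
qed

end
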